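(* Let $F_1,F_2$ be two real quadratic forms on $\mathbf{R}^n$ such that $\alpha F_1+\beta F_2$ is strictly hyperbolic for every $(\alpha,\beta)\in\mathbf{R}^2\setminus\{0\}$. Then there exist $C>0$ and a positive quadratic form $Q\in K_C$ with $\mathrm{Tr}(F_1Q)=\mathrm{Tr}(F_2Q)=0$.
   Context: Quadratic forms are identified with real symmetric $n\times n$ matrices. A symmetric matrix $A$ with largest eigenvalue $\lambda_{\max}(A)$ and smallest eigenvalue $\lambda_{\min}(A)$ is strictly hyperbolic if $1/M<-\lambda_{\max}(A)/\lambda_{\min}(A)<M$ for some $M>0$ (in particular $\lambda_{\max}>0>\lambda_{\min}$). For $C>0$, $K_C$ is the set of symmetric matrices $(a_{ij})$ with $C^{-1}|\xi|^2\le\sum a_{ij}\xi_i\xi_j\le C|\xi|^2$ for all $\xi\in\mathbf{R}^n$. *)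

theory Defs
  imports "HOL-Analysis.Analysis"
begin

text \<open>Real quadratic forms on R^n are identified with real symmetric n x n matrices.\<close>

definition symmetric_mat :: "real^'n^'n \<Rightarrow> bool" where
  "symmetric_mat A \<longleftrightarrow> transpose A = A"

definition is_eigenvalue :: "real^'n^'n \<Rightarrow> real \<Rightarrow> bool" where
  "is_eigenvalue A l \<longleftrightarrow> (\<exists>v. v \<noteq> 0 \<and> A *v v = l *\<^sub>R v)"

definition lambda_max :: "real^'n^'n \<Rightarrow> real" where
  "lambda_max A = Max {l. is_eigenvalue A l}"

definition lambda_min :: "real^'n^'n \<Rightarrow> real" where
  "lambda_min A = Min {l. is_eigenvalue A l}"

definition strictly_hyperbolic :: "real^'n^'n \<Rightarrow> bool" where
  "strictly_hyperbolic A \<longleftrightarrow> symmetric_mat A \<and>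
     (\<exists>M>0. 1 / M < - lambda_max A / lambda_min A \<and> - lambda_max A / lambda_min A < M)"

definition K :: "real \<Rightarrow> (real^'n^'n) set" where
  "K C = {A. symmetric_mat A \<and>
     (\<forall>\<xi>::real^'n. inverse C * (norm \<xi>)\<^sup>2 \<le> \<xi> \<bullet> (A *v \<xi>) \<and> \<xi> \<bullet> (A *v \<xi>) \<le> C * (norm \<xi>)\<^sup>2)}"

end

theory Submission
  imports Defs
begin

text \<open>The positive definite matrices form a convex set, so its image under the linear map
  \<open>Q \<mapsto> (tr (F\<^sub>1Q), tr (F\<^sub>2Q))\<close> is convex in \<open>\<real>\<^sup>2\<close>. If it missed the origin, a separating
  line would give \<open>(\<alpha>, \<beta>) \<noteq> 0\<close> with \<open>tr ((\<alpha>F\<^sub>1 + \<beta>F\<^sub>2) Q) \<ge> 0\<close> for every positive definite \<open>Q\<close>;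
  testing with \<open>\<xi>\<xi>\<^sup>T + \<epsilon>I\<close> and letting \<open>\<epsilon> \<rightarrow> 0\<close> shows that \<open>\<alpha>F\<^sub>1 + \<beta>F\<^sub>2\<close> is positive
  semidefinite. Then all its eigenvalues are nonnegative, so \<open>-\<lambda>\<^sub>m\<^sub>a\<^sub>x/\<lambda>\<^sub>m\<^sub>i\<^sub>n \<le> 0\<close> and it is not
  strictly hyperbolic. Hence some positive definite \<open>Q\<close> has both traces zero, and by compactness
  of the unit sphere it lies in some \<open>K\<^sub>C\<close>.\<close>

definition positive_definite :: "real^'n^'n \<Rightarrow> bool" where
  "positive_definite Q \<longleftrightarrow> symmetric_mat Q \<and> (\<forall>\<xi>. \<xi> \<noteq> 0 \<longrightarrow> 0 < \<xi> \<bullet> (Q *v \<xi>))"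

definition outer_product :: "real^'n \<Rightarrow> real^'n^'n" where
  "outer_product \<xi> = (\<chi> i j. \<xi>$i * \<xi>$j)"

lemma symmetric_mat_inner_commute:
  fixes G :: "real^'n^'n"
  assumes "symmetric_mat G"
  shows "x \<bullet> (G *v y) = y \<bullet> (G *v x)"
proof -
  have "x \<bullet> (G *v y) = (transpose G *v x) \<bullet> y"
    by (simp add: dot_lmul_matrix)
  then show ?thesis
    using assms by (metis symmetric_mat_def inner_commute)
qed

lemma quadratic_form_attains_min_on_sphere:
  fixes G :: "real^'n^'n"
  shows "\<exists>x. norm x = 1 \<and> (\<forall>z. (x \<bullet> (G *v x)) * (norm z)\<^sup>2 \<le> z \<bullet> (G *v z))"
proof -
  let ?f = "\<lambda>x. x \<bullet> (G *v x)"
  have "sphere (0::real^'n) 1 \<noteq> {}"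
    using vector_choose_size[of 1] by auto
  moreover have "continuous_on (sphere 0 1) ?f"
    by (intro continuous_intros linear_continuous_on)
      (simp add: linear_linear matrix_vector_mul_linear)
  ultimately obtain x where x: "x \<in> sphere 0 1" "\<forall>y\<in>sphere 0 1. ?f x \<le> ?f y"
    using continuous_attains_inf[OF compact_sphere] by blast
  have "?f x * (norm z)\<^sup>2 \<le> ?f z" if "z \<noteq> 0" for z
  proof -
    have "inverse (norm z) *\<^sub>R z \<in> sphere 0 1"
      using that by simp
    then have "?f x \<le> ?f (inverse (norm z) *\<^sub>R z)"
      using x(2) by blast
    also have "\<dots> = ?f z / (norm z)\<^sup>2"
      by (simp add: matrix_vector_mult_scaleR power2_eq_square field_simps)
    finally show ?thesis
      using that by (simp add: field_simps)
  qed
  then show ?thesis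
    using x(1) by (metis inner_zero_left mem_sphere_0 norm_zero power2_eq_square mult_zero_right order_refl)
qed

lemma quadratic_form_bounded_above:
  fixes G :: "real^'n^'n"
  shows "\<exists>B. \<forall>z. z \<bullet> (G *v z) \<le> B * (norm z)\<^sup>2"
proof -
  obtain y where "\<forall>z. (y \<bullet> ((-1) *\<^sub>R G *v y)) * (norm z)\<^sup>2 \<le> z \<bullet> ((-1) *\<^sub>R G *v z)"
    using quadratic_form_attains_min_on_sphere by blast
  then show ?thesis
    by (metis (no_types) scaleR_matrix_vector_assoc inner_scaleR_right minus_mult_left
        mult_minus1 neg_le_iff_le)
qed

lemma linear_coeff_zero_if_nonneg:
  fixes c d :: real
  assumes "\<forall>t. 0 \<le> 2*t*c + t^2*d"
  shows "c = 0"
proof (rule ccontr)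
  assume "c \<noteq> 0"
  define k where "k = \<bar>d\<bar> + 1"
  have k: "k > 0" "d \<le> k"
    by (auto simp: k_def)
  define t where "t = - c / k"
  have "0 \<le> 2*t*c + t^2*d"
    using assms by blast
  also have "t^2*d \<le> t^2*k"
    using k by (simp add: mult_left_mono)
  also have "2*t*c + t^2*k = - (c^2/k)"
    using k by (simp add: t_def power2_eq_square field_simps)
  finally show False
    using \<open>c \<noteq> 0\<close> k by (simp add: divide_le_0_iff)
qed

text \<open>A minimiser \<open>x\<close> of the quadratic form on the sphere is an eigenvector: the first variation
  of the Rayleigh quotient in any direction \<open>y\<close> vanishes, i.e. \<open>y \<bullet> (G x - l x) = 0\<close>.\<close>

lemma symmetric_mat_has_eigenvalue:
  fixes G :: "real^'n^'n"
  assumes sym: "symmetric_mat G"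
  shows "\<exists>l. is_eigenvalue G l"
proof -
  obtain x where x1: "norm x = 1" and xm: "\<forall>z. (x \<bullet> (G *v x)) * (norm z)\<^sup>2 \<le> z \<bullet> (G *v z)"
    using quadratic_form_attains_min_on_sphere by blast
  define l where "l = x \<bullet> (G *v x)"
  have first_variation: "y \<bullet> (G *v x) - l * (x \<bullet> y) = 0" for y
  proof (rule linear_coeff_zero_if_nonneg, intro allI)
    fix t :: real
    let ?z = "x + t *\<^sub>R y"
    have "(norm ?z)\<^sup>2 = 1 + 2*t*(x \<bullet> y) + t^2 * (y \<bullet> y)"
      using x1 unfolding power2_norm_eq_inner
      by (simp add: norm_eq_1 inner_add_left inner_add_right inner_commute power2_eq_square
          algebra_simps)
    moreover have "?z \<bullet> (G *v ?z) = l + 2*t*(y \<bullet> (G *v x)) + t^2 * (y \<bullet> (G *v y))"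
      using symmetric_mat_inner_commute[OF sym, of x y]
      by (simp add: l_def matrix_vector_right_distrib matrix_vector_mult_scaleR inner_add_left
          inner_add_right power2_eq_square algebra_simps)
    ultimately show "0 \<le> 2*t*(y \<bullet> (G *v x) - l * (x \<bullet> y)) + t^2*(y \<bullet> (G *v y) - l * (y \<bullet> y))"
      using xm[rule_format, of ?z] by (simp add: l_def algebra_simps)
  qed
  have "(G *v x - l *\<^sub>R x) \<bullet> (G *v x - l *\<^sub>R x) = 0"
    using first_variation[of "G *v x - l *\<^sub>R x"]
    by (simp add: inner_diff_right inner_commute algebra_simps)
  then have "G *v x = l *\<^sub>R x"
    by simp
  moreover have "x \<noteq> 0"
    using x1 by auto
  ultimately show ?thesis
    unfolding is_eigenvalue_def by blast
qed

text \<open>Eigenvectors of distinct eigenvalues are orthogonal, and an orthogonal family of nonzero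
  vectors is finite.\<close>

lemma symmetric_mat_finite_eigenvalues:
  fixes G :: "real^'n^'n"
  assumes sym: "symmetric_mat G"
  shows "finite {l. is_eigenvalue G l}"
proof -
  let ?S = "{l. is_eigenvalue G l}"
  define v where "v l = (SOME v. v \<noteq> 0 \<and> G *v v = l *\<^sub>R v)" for l
  have v: "v l \<noteq> 0 \<and> G *v v l = l *\<^sub>R v l" if "l \<in> ?S" for l
    using that someI_ex[of "\<lambda>v. v \<noteq> 0 \<and> G *v v = l *\<^sub>R v"]
    unfolding v_def is_eigenvalue_def by blast
  have orth: "v l \<bullet> v m = 0" if "l \<in> ?S" "m \<in> ?S" "l \<noteq> m" for l m
  proof -
    have "l * (v l \<bullet> v m) = v m \<bullet> (G *v v l)"
      using v[OF that(1)] by (simp add: inner_commute)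
    also have "\<dots> = m * (v l \<bullet> v m)"
      using v[OF that(2)] symmetric_mat_inner_commute[OF sym] by simp
    finally show ?thesis
      using that(3) by simp
  qed
  have inj: "inj_on v ?S"
    using orth v by (metis inj_onI inner_eq_zero_iff)
  have "pairwise orthogonal (v ` ?S)"
    using orth unfolding pairwise_def orthogonal_def by blast
  then have "finite (v ` ?S)"
    by (rule pairwise_orthogonal_imp_finite)
  then show ?thesis
    using inj finite_imageD by blast
qed

lemma symmetric_mat_lambda_min:
  fixes G :: "real^'n^'n"
  assumes "symmetric_mat G"
  shows "is_eigenvalue G (lambda_min G)" and "lambda_min G \<le> lambda_max G"
proof -
  have fin: "finite {l. is_eigenvalue G l}" and ne: "{l. is_eigenvalue G l} \<noteq> {}"
    using symmetric_mat_finite_eigenvalues symmetric_mat_has_eigenvalue assms by auto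
  show "is_eigenvalue G (lambda_min G)"
    using Min_in[OF fin ne] by (simp add: lambda_min_def)
  then show "lambda_min G \<le> lambda_max G"
    unfolding lambda_max_def by (simp add: Max_ge[OF fin])
qed

lemma eigenvalue_nonneg_if_psd:
  fixes G :: "real^'n^'n"
  assumes "\<forall>\<xi>. 0 \<le> \<xi> \<bullet> (G *v \<xi>)" and "is_eigenvalue G l"
  shows "0 \<le> l"
proof -
  obtain w where w: "w \<noteq> 0" "G *v w = l *\<^sub>R w"
    using assms(2) unfolding is_eigenvalue_def by blast
  have "0 \<le> w \<bullet> (G *v w)"
    using assms(1) by blast
  also have "\<dots> = l * (w \<bullet> w)"
    using w by simp
  moreover have "0 < w \<bullet> w"
    using w(1) by simp
  ultimately show ?thesis
    by (simp add: zero_le_mult_iff)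
qed

lemma psd_not_strictly_hyperbolic:
  fixes G :: "real^'n^'n"
  assumes "symmetric_mat G" and psd: "\<forall>\<xi>. 0 \<le> \<xi> \<bullet> (G *v \<xi>)"
  shows "\<not> strictly_hyperbolic G"
proof -
  have "0 \<le> lambda_min G"
    using eigenvalue_nonneg_if_psd[OF psd] symmetric_mat_lambda_min(1)[OF assms(1)] .
  moreover have "0 \<le> lambda_max G"
    using calculation symmetric_mat_lambda_min(2)[OF assms(1)] by linarith
  \<comment> \<open>this also covers \<open>lambda_min G = 0\<close>, where the quotient is \<open>0\<close> by the convention \<open>x / 0 = 0\<close>\<close>
  ultimately have "- lambda_max G / lambda_min G \<le> 0"
    by simp
  moreover have "1 / M > 0" if "M > 0" for M :: real
    using that by simp
  ultimately show ?thesis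
    unfolding strictly_hyperbolic_def by (meson less_trans not_less)
qed

lemma positive_definite_in_K:
  fixes Q :: "real^'n^'n"
  assumes "positive_definite Q"
  shows "\<exists>C>0. Q \<in> K C"
proof -
  obtain x where x1: "norm x = 1" and lower: "\<forall>z. (x \<bullet> (Q *v x)) * (norm z)\<^sup>2 \<le> z \<bullet> (Q *v z)"
    using quadratic_form_attains_min_on_sphere by blast
  define m where "m = x \<bullet> (Q *v x)"
  have m: "m > 0"
    using assms x1 unfolding positive_definite_def m_def by (metis norm_zero zero_neq_one)
  obtain B where upper: "\<forall>z. z \<bullet> (Q *v z) \<le> B * (norm z)\<^sup>2"
    using quadratic_form_bounded_above by blast
  define C where "C = max (1/m) (max B 1)"
  have C: "C > 0" "1/m \<le> C" "B \<le> C"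
    by (auto simp: C_def)
  then have "inverse C \<le> m"
    using le_imp_inverse_le[of "1/m" C] m by simp
  have "inverse C * (norm \<xi>)\<^sup>2 \<le> \<xi> \<bullet> (Q *v \<xi>)" for \<xi>
    using lower m_def mult_right_mono[OF \<open>inverse C \<le> m\<close>, of "(norm \<xi>)\<^sup>2"]
    by (metis order_trans zero_le_power2)
  moreover have "\<xi> \<bullet> (Q *v \<xi>) \<le> C * (norm \<xi>)\<^sup>2" for \<xi>
    using upper mult_right_mono[OF C(3), of "(norm \<xi>)\<^sup>2"] by (meson order_trans zero_le_power2)
  ultimately show ?thesis
    using C(1) assms by (auto simp: K_def positive_definite_def)
qed

lemma trace_mult_add_right:
  fixes F A B :: "real^'n^'n"
  shows "trace (F ** (A + B)) = trace (F ** A) + trace (F ** B)"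
  by (simp add: matrix_add_ldistrib trace_add)

lemma trace_mult_scaleR_right:
  fixes F A :: "real^'n^'n"
  shows "trace (F ** (c *\<^sub>R A)) = c * trace (F ** A)"
  by (simp add: trace_def matrix_matrix_mult_def sum_distrib_left algebra_simps)

lemma trace_scaleR_add_mult:
  fixes F1 F2 Q :: "real^'n^'n"
  shows "trace ((a *\<^sub>R F1 + b *\<^sub>R F2) ** Q) = a * trace (F1 ** Q) + b * trace (F2 ** Q)"
  by (simp add: trace_def matrix_matrix_mult_def sum.distrib sum_distrib_left algebra_simps)

lemma trace_mult_outer_product: "trace (G ** outer_product \<xi>) = \<xi> \<bullet> (G *v \<xi>)"
  by (simp add: outer_product_def trace_def matrix_matrix_mult_def matrix_vector_mult_def
      inner_vec_def sum_distrib_left algebra_simps)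

lemma outer_product_mult_vector: "outer_product \<xi> *v \<eta> = (\<xi> \<bullet> \<eta>) *\<^sub>R \<xi>"
  by (simp add: outer_product_def vec_eq_iff matrix_vector_mult_def inner_vec_def
      sum_distrib_left algebra_simps)

lemma symmetric_mat_scaleR_add:
  assumes "symmetric_mat A" and "symmetric_mat B"
  shows "symmetric_mat (u *\<^sub>R A + v *\<^sub>R B)"
  using assms by (simp add: symmetric_mat_def transpose_def vec_eq_iff)

lemma quadratic_form_scaleR_add:
  fixes A B :: "real^'n^'n"
  shows "\<xi> \<bullet> ((u *\<^sub>R A + v *\<^sub>R B) *v \<xi>) = u * (\<xi> \<bullet> (A *v \<xi>)) + v * (\<xi> \<bullet> (B *v \<xi>))"
  by (simp add: matrix_vector_mult_add_rdistrib inner_add_right flip: scaleR_matrix_vector_assoc)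

lemma convex_positive_definite: "convex {Q :: real^'n^'n. positive_definite Q}"
proof (rule convexI)
  fix A B :: "real^'n^'n" and u v :: real
  assume A: "A \<in> {Q. positive_definite Q}" and B: "B \<in> {Q. positive_definite Q}"
    and uv: "0 \<le> u" "0 \<le> v" "u + v = 1"
  have "0 < \<xi> \<bullet> ((u *\<^sub>R A + v *\<^sub>R B) *v \<xi>)" if "\<xi> \<noteq> 0" for \<xi>
  proof -
    have "0 < \<xi> \<bullet> (A *v \<xi>)" "0 < \<xi> \<bullet> (B *v \<xi>)"
      using A B that by (auto simp: positive_definite_def)
    then show ?thesis
      using uv by (cases "u = 0") (simp_all add: quadratic_form_scaleR_add add_pos_nonneg)
  qed
  then show "u *\<^sub>R A + v *\<^sub>R B \<in> {Q. positive_definite Q}"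
    using A B by (simp add: positive_definite_def symmetric_mat_scaleR_add)
qed

lemma positive_definite_outer_product_plus:
  assumes "e > 0"
  shows "positive_definite (outer_product \<xi> + e *\<^sub>R mat 1)"
proof -
  have "symmetric_mat (outer_product \<xi> + e *\<^sub>R mat 1)"
    by (simp add: symmetric_mat_def outer_product_def transpose_def mat_def vec_eq_iff mult.commute)
  moreover have "0 < \<eta> \<bullet> ((outer_product \<xi> + e *\<^sub>R mat 1) *v \<eta>)" if "\<eta> \<noteq> 0" for \<eta>
  proof -
    have "\<eta> \<bullet> ((outer_product \<xi> + e *\<^sub>R mat 1) *v \<eta>) = (\<xi> \<bullet> \<eta>)\<^sup>2 + e * (\<eta> \<bullet> \<eta>)"
      by (simp add: matrix_vector_mult_add_rdistrib outer_product_mult_vector inner_add_right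
          power2_eq_square inner_commute flip: scaleR_matrix_vector_assoc)
    moreover have "0 < e * (\<eta> \<bullet> \<eta>)"
      using assms that by simp
    ultimately show ?thesis
      by (simp add: add_nonneg_pos)
  qed
  ultimately show ?thesis
    by (simp add: positive_definite_def)
qed

lemma nonneg_if_nonneg_plus_eps_mult:
  fixes a b :: real
  assumes "\<forall>e>0. 0 \<le> a + e * b"
  shows "0 \<le> a"
proof (rule ccontr)
  assume a: "\<not> 0 \<le> a"
  show False
  proof (cases "b \<le> 0")
    case True
    then show False
      using assms[rule_format, of 1] a by simp
  next
    case False
    have "0 < - a / (2*b)"
      using a False by (intro divide_pos_pos) simp_all
    then have "0 \<le> a + (- a / (2*b)) * b"
      using assms by blast
    also have "(- a / (2*b)) * b = - a / 2"
      using False by (simp add: field_simps)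
    finally show False
      using a by simp
  qed
qed

lemma psd_if_trace_nonneg:
  fixes G :: "real^'n^'n"
  assumes "\<forall>Q. positive_definite Q \<longrightarrow> 0 \<le> trace (G ** Q)"
  shows "0 \<le> \<xi> \<bullet> (G *v \<xi>)"
proof (rule nonneg_if_nonneg_plus_eps_mult[where b = "trace G"], intro allI impI)
  fix e :: real
  assume "e > 0"
  then have "0 \<le> trace (G ** (outer_product \<xi> + e *\<^sub>R mat 1))"
    using assms positive_definite_outer_product_plus by blast
  also have "\<dots> = \<xi> \<bullet> (G *v \<xi>) + e * trace G"
    by (simp add: trace_mult_add_right trace_mult_scaleR_right trace_mult_outer_product)
  finally show "0 \<le> \<xi> \<bullet> (G *v \<xi>) + e * trace G" .
qed

lemma positive_definite_trace_orthogonal: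
  fixes F1 F2 :: "real^'n^'n"
  assumes "\<forall>\<alpha> \<beta>. (\<alpha>, \<beta>) \<noteq> (0, 0) \<longrightarrow> \<not> (\<forall>\<xi>. 0 \<le> \<xi> \<bullet> ((\<alpha> *\<^sub>R F1 + \<beta> *\<^sub>R F2) *v \<xi>))"
  shows "\<exists>Q. positive_definite Q \<and> trace (F1 ** Q) = 0 \<and> trace (F2 ** Q) = 0"
proof -
  define T where "T Q = (trace (F1 ** Q), trace (F2 ** Q))" for Q :: "real^'n^'n"
  have "linear T"
    by (intro linearI) (simp_all add: T_def trace_mult_add_right trace_mult_scaleR_right)
  then have convex_image: "convex (T ` {Q. positive_definite Q})"
    using convex_linear_image convex_positive_definite by blast
  have "0 \<in> T ` {Q. positive_definite Q}"
  proof (rule ccontr)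
    assume "0 \<notin> T ` {Q. positive_definite Q}"
    then obtain \<alpha> \<beta> where nonzero: "(\<alpha>, \<beta>) \<noteq> (0, 0)"
      and separating: "\<forall>Q \<in> {Q. positive_definite Q}. 0 \<le> (\<alpha>, \<beta>) \<bullet> T Q"
      using separating_hyperplane_set_0[OF convex_image] by (auto simp: zero_prod_def)
    have "(\<alpha>, \<beta>) \<bullet> T Q = trace ((\<alpha> *\<^sub>R F1 + \<beta> *\<^sub>R F2) ** Q)" for Q
      by (simp add: T_def trace_scaleR_add_mult)
    then have "0 \<le> \<xi> \<bullet> ((\<alpha> *\<^sub>R F1 + \<beta> *\<^sub>R F2) *v \<xi>)" for \<xi>
      using separating by (intro psd_if_trace_nonneg) auto
    then show False
      using assms nonzero by blast
  qed
  then show ?thesis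
    by (auto simp: T_def zero_prod_def)
qed

theorem lemma5p2:
  fixes F1 F2 :: "real^'n^'n"
  assumes "symmetric_mat F1" and "symmetric_mat F2"
    and "\<forall>\<alpha> \<beta>::real. (\<alpha>, \<beta>) \<noteq> (0, 0) \<longrightarrow> strictly_hyperbolic (\<alpha> *\<^sub>R F1 + \<beta> *\<^sub>R F2)"
  shows "\<exists>C>0. \<exists>Q. Q \<in> K C \<and> trace (F1 ** Q) = 0 \<and> trace (F2 ** Q) = 0"
proof -
  have "\<forall>\<alpha> \<beta>. (\<alpha>, \<beta>) \<noteq> (0, 0) \<longrightarrow> \<not> (\<forall>\<xi>. 0 \<le> \<xi> \<bullet> ((\<alpha> *\<^sub>R F1 + \<beta> *\<^sub>R F2) *v \<xi>))"
    using assms(3) psd_not_strictly_hyperbolic strictly_hyperbolic_def by blast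
  then obtain Q where "positive_definite Q" "trace (F1 ** Q) = 0" "trace (F2 ** Q) = 0"
    using positive_definite_trace_orthogonal by blast
  then show ?thesis
    using positive_definite_in_K by blast
qed

end
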